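(* The graph ${\rm SR}(m,n)$ is not determined by its spectrum (that is, there is a graph not isomorphic to ${\rm SR}(m,n)$ whose adjacency matrix has the same spectrum) when (a) $m=4$ and $n\ge 3$, or (b) $n=3$ and $m\ge 4$.
   Context: ${\rm SR}(m,n)$ is the graph whose vertices are the vectors in $\{0,1,2,\dots\}^m$ with coordinate sum $n$, two vertices being adjacent when they differ in precisely two coordinate positions. *)

theory Defs
  imports "Jordan_Normal_Form.Char_Poly" "HOL-Library.List_Lexorder"
begin

definition simple_graph :: "'a set \<Rightarrow> ('a \<Rightarrow> 'a \<Rightarrow> bool) \<Rightarrow> bool" where
  "simple_graph V E \<longleftrightarrow> finite V \<and> (\<forall>x y. E x y \<longrightarrow> x \<in> V \<and> y \<in> V)
     \<and> (\<forall>x y. E x y \<longrightarrow> E y x) \<and> (\<forall>x. \<not> E x x)"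

definition adj_matrix :: "'a::linorder set \<Rightarrow> ('a \<Rightarrow> 'a \<Rightarrow> bool) \<Rightarrow> real mat" where
  "adj_matrix V E = (let vs = sorted_list_of_set V in
     mat (length vs) (length vs) (\<lambda>(i,j). if E (vs ! i) (vs ! j) then 1 else 0))"

text \<open>Same spectrum (eigenvalues with multiplicities) = same characteristic polynomial.\<close>
definition cospectral :: "'a::linorder set \<Rightarrow> ('a \<Rightarrow> 'a \<Rightarrow> bool) \<Rightarrow>
    'b::linorder set \<Rightarrow> ('b \<Rightarrow> 'b \<Rightarrow> bool) \<Rightarrow> bool" where
  "cospectral V E W F \<longleftrightarrow> char_poly (adj_matrix V E) = char_poly (adj_matrix W F)"

definition graph_iso :: "'a set \<Rightarrow> ('a \<Rightarrow> 'a \<Rightarrow> bool) \<Rightarrow>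
    'b set \<Rightarrow> ('b \<Rightarrow> 'b \<Rightarrow> bool) \<Rightarrow> bool" where
  "graph_iso V E W F \<longleftrightarrow> (\<exists>f. bij_betw f V W \<and> (\<forall>x\<in>V. \<forall>y\<in>V. E x y \<longleftrightarrow> F (f x) (f y)))"

text \<open>Determined by spectrum: every cospectral finite simple graph is isomorphic.
  Every finite graph is isomorphic to one on a subset of nat, so quantifying over such graphs suffices.\<close>
definition DS :: "'a::linorder set \<Rightarrow> ('a \<Rightarrow> 'a \<Rightarrow> bool) \<Rightarrow> bool" where
  "DS V E \<longleftrightarrow> (\<forall>(W::nat set) F. simple_graph W F \<and> cospectral V E W F \<longrightarrow> graph_iso V E W F)"

text \<open>SR(m,n): vectors in {0,1,2,...}^m (lists of length m) with coordinate sum n,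
  adjacent iff they differ in precisely two coordinates.\<close>
definition SR_verts :: "nat \<Rightarrow> nat \<Rightarrow> nat list set" where
  "SR_verts m n = {xs. length xs = m \<and> sum_list xs = n}"

definition SR_adj :: "nat \<Rightarrow> nat \<Rightarrow> nat list \<Rightarrow> nat list \<Rightarrow> bool" where
  "SR_adj m n xs ys \<longleftrightarrow> xs \<in> SR_verts m n \<and> ys \<in> SR_verts m n
     \<and> card {i. i < m \<and> xs ! i \<noteq> ys ! i} = 2"

end

theory Submission
  imports Defs
begin

text \<open>Godsil--McKay switching with respect to a set \<open>C\<close> of four vertices that induces a regular
  subgraph, and such that every other vertex has \<open>0\<close>, \<open>2\<close> or \<open>4\<close> neighbours in \<open>C\<close>, yields a
  cospectral graph: its adjacency matrix is \<open>Q A Q\<close> for the involution \<open>Q\<close> which is \<open>J/2 - I\<close> on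
  \<open>C\<close> and the identity elsewhere.
  In \<open>SR(m,n)\<close> the common neighbours of an edge \<open>x y\<close>, where \<open>x\<close> and \<open>y\<close> differ at the
  coordinates \<open>i\<close> and \<open>j\<close>, form at most three cliques with no edges between them, according to
  whether their \<open>i\<close>-th coordinate is \<open>y\<^sub>i\<close>, \<open>x\<^sub>i\<close> or neither. For \<open>m = 4, n \<ge> 5\<close> (the four
  corners \<open>n e\<^sub>k\<close>), for \<open>m = n = 4\<close>, and for \<open>n = 3, m \<ge> 4\<close> (the vertices supported on the
  first two coordinates) there is a switching set after which some edge has four pairwise
  non-adjacent common neighbours, or an induced path on three vertices among them; so the switched
  graph is cospectral with \<open>SR(m,n)\<close> but not isomorphic to it.\<close>

section \<open>Godsil--McKay switching\<close>

definition switching_matrix :: "nat \<Rightarrow> nat set \<Rightarrow> real mat" where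
  "switching_matrix N K = mat N N (\<lambda>(i,j).
     if i \<in> K \<and> j \<in> K then 1/2 - (if i = j then 1 else 0) else (if i = j then 1 else 0))"

lemma switching_matrix_carrier: "switching_matrix N K \<in> carrier_mat N N"
  by (simp add: switching_matrix_def)

lemma switching_matrix_sym: "i < N \<Longrightarrow> j < N \<Longrightarrow> switching_matrix N K $$ (i,j) = switching_matrix N K $$ (j,i)"
  by (auto simp: switching_matrix_def)

lemma sum_switching_matrix_row:
  fixes f :: "nat \<Rightarrow> real"
  assumes K: "K \<subseteq> {..<N}" and i: "i < N"
  shows "(\<Sum>k\<in>{0..<N}. switching_matrix N K $$ (i,k) * f k) =
    (if i \<in> K then (\<Sum>k\<in>K. f k) / 2 - f i else f i)"
proof (cases "i \<in> K")
  case True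
  have "(\<Sum>k\<in>{0..<N}. switching_matrix N K $$ (i,k) * f k) =
      (\<Sum>k\<in>{0..<N}. (if k \<in> K then f k / 2 else 0) - (if k = i then f k else 0))"
    using True i by (intro sum.cong) (auto simp: switching_matrix_def)
  also have "\<dots> = (\<Sum>k\<in>K. f k / 2) - f i"
    using K i by (simp add: sum_subtractf sum.If_cases Int_absorb1 subset_eq)
  finally show ?thesis using True by (simp add: sum_divide_distrib)
next
  case False
  have "(\<Sum>k\<in>{0..<N}. switching_matrix N K $$ (i,k) * f k) = (\<Sum>k\<in>{0..<N}. if k = i then f k else 0)"
    using False i by (intro sum.cong) (auto simp: switching_matrix_def)
  then show ?thesis using False i by simp
qed

lemma sum_switching_matrix_col:
  fixes f :: "nat \<Rightarrow> real"
  assumes K: "K \<subseteq> {..<N}" and j: "j < N"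
  shows "(\<Sum>k\<in>{0..<N}. f k * switching_matrix N K $$ (k,j)) =
    (if j \<in> K then (\<Sum>k\<in>K. f k) / 2 - f j else f j)"
proof -
  have "(\<Sum>k\<in>{0..<N}. f k * switching_matrix N K $$ (k,j)) =
      (\<Sum>k\<in>{0..<N}. switching_matrix N K $$ (j,k) * f k)"
    using j by (intro sum.cong) (auto simp: switching_matrix_sym)
  then show ?thesis using sum_switching_matrix_row[OF K j] by simp
qed

lemma switching_matrix_involution:
  assumes K: "K \<subseteq> {..<N}" and card: "card K = 4"
  shows "switching_matrix N K * switching_matrix N K = 1\<^sub>m N"
proof (rule eq_matI)
  fix i j assume "i < dim_row (1\<^sub>m N :: real mat)" "j < dim_col (1\<^sub>m N :: real mat)"
  then have i: "i < N" and j: "j < N" by auto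
  have "(switching_matrix N K * switching_matrix N K) $$ (i,j) =
      (\<Sum>k\<in>{0..<N}. switching_matrix N K $$ (i,k) * switching_matrix N K $$ (k,j))"
    using i j by (simp add: switching_matrix_def scalar_prod_def)
  also have "\<dots> = (if i \<in> K then (\<Sum>k\<in>K. switching_matrix N K $$ (k,j)) / 2 - switching_matrix N K $$ (i,j)
      else switching_matrix N K $$ (i,j))"
    by (rule sum_switching_matrix_row[OF K i])
  also have "(\<Sum>k\<in>K. switching_matrix N K $$ (k,j)) = (if j \<in> K then 1 else 0)"
  proof -
    have "(\<Sum>k\<in>K. switching_matrix N K $$ (k,j)) = (\<Sum>k\<in>K. if j \<in> K then 1/2 - (if k = j then 1 else 0) else 0)"
      using K j by (intro sum.cong) (auto simp: switching_matrix_def)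
    then show ?thesis
      using card finite_subset[OF K] by (simp add: sum_subtractf)
  qed
  finally show "(switching_matrix N K * switching_matrix N K) $$ (i,j) = 1\<^sub>m N $$ (i,j)"
    using i j by (auto simp: switching_matrix_def)
qed (simp_all add: switching_matrix_def)

lemma switching_matrix_conj_entry:
  fixes a :: "nat \<Rightarrow> nat \<Rightarrow> real"
  assumes K: "K \<subseteq> {..<N}" and i: "i < N" and j: "j < N"
  shows "(switching_matrix N K * mat N N (\<lambda>(i,j). a i j) * switching_matrix N K) $$ (i,j) =
    (if i \<in> K \<and> j \<in> K then (\<Sum>k\<in>K. \<Sum>l\<in>K. a l k) / 4 - (\<Sum>k\<in>K. a i k) / 2 - (\<Sum>l\<in>K. a l j) / 2 + a i j
     else if i \<in> K then (\<Sum>l\<in>K. a l j) / 2 - a i j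
     else if j \<in> K then (\<Sum>k\<in>K. a i k) / 2 - a i j
     else a i j)"
proof -
  let ?Q = "switching_matrix N K" and ?A = "mat N N (\<lambda>(i,j). a i j)"
  define qa where "qa k = (if i \<in> K then (\<Sum>l\<in>K. a l k) / 2 - a i k else a i k)" for k
  have QA: "(?Q * ?A) $$ (i,k) = qa k" if k: "k < N" for k
  proof -
    have "(?Q * ?A) $$ (i,k) = (\<Sum>l\<in>{0..<N}. ?Q $$ (i,l) * a l k)"
      using i k by (simp add: switching_matrix_def scalar_prod_def)
    then show ?thesis unfolding qa_def using sum_switching_matrix_row[OF K i] by simp
  qed
  have "(?Q * ?A * ?Q) $$ (i,j) = (\<Sum>k\<in>{0..<N}. qa k * ?Q $$ (k,j))"
    using i j by (simp add: switching_matrix_def scalar_prod_def QA[symmetric])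
  also have "\<dots> = (if j \<in> K then (\<Sum>k\<in>K. qa k) / 2 - qa j else qa j)"
    by (rule sum_switching_matrix_col[OF K j])
  also have "(\<Sum>k\<in>K. qa k) = (if i \<in> K then (\<Sum>k\<in>K. \<Sum>l\<in>K. a l k) / 2 - (\<Sum>k\<in>K. a i k) else (\<Sum>k\<in>K. a i k))"
    by (simp add: qa_def sum_subtractf sum_divide_distrib)
  finally show ?thesis by (simp add: qa_def)
qed

lemma zero_one_eq_if_sum_extremal:
  fixes g :: "'a \<Rightarrow> real"
  assumes K: "finite K" and g01: "\<And>l. g l = 0 \<or> g l = 1"
    and sum: "sum g K = 0 \<or> sum g K = card K" and l: "l \<in> K"
  shows "g l = sum g K / card K"
proof -
  have nonneg: "0 \<le> g l" "0 \<le> 1 - g l" for l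
    using g01[of l] by auto
  have "(\<Sum>l\<in>K. 1 - g l) = card K - sum g K"
    by (simp add: sum_subtractf)
  then show ?thesis
    using sum l K sum_nonneg_eq_0_iff[OF K nonneg(1)] sum_nonneg_eq_0_iff[OF K nonneg(2)]
    by (auto simp: card_gt_0_iff)
qed

lemma switching_matrix_conj:
  fixes a :: "nat \<Rightarrow> nat \<Rightarrow> real"
  assumes K: "K \<subseteq> {..<N}" and card: "card K = 4"
    and a01: "\<And>i j. a i j = 0 \<or> a i j = 1"
    and sym: "\<And>i j. a i j = a j i"
    and reg: "\<And>k. k \<in> K \<Longrightarrow> (\<Sum>l\<in>K. a k l) = r"
    and out: "\<And>k. k < N \<Longrightarrow> k \<notin> K \<Longrightarrow> (\<Sum>l\<in>K. a k l) \<in> {0, 2, 4}"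
  shows "switching_matrix N K * mat N N (\<lambda>(i,j). a i j) * switching_matrix N K =
    mat N N (\<lambda>(i,j). if (i \<in> K \<and> j \<notin> K \<and> (\<Sum>l\<in>K. a j l) = 2) \<or> (j \<in> K \<and> i \<notin> K \<and> (\<Sum>l\<in>K. a i l) = 2)
      then 1 - a i j else a i j)"
    (is "_ = mat N N ?b")
proof (rule eq_matI)
  fix i j assume "i < dim_row (mat N N ?b)" "j < dim_col (mat N N ?b)"
  then have i: "i < N" and j: "j < N" by auto
  define d where "d k = (\<Sum>l\<in>K. a k l)" for k
  have col: "(\<Sum>l\<in>K. a l k) = d k" for k
    unfolding d_def by (intro sum.cong) (auto simp: sym)
  have total: "(\<Sum>k\<in>K. \<Sum>l\<in>K. a l k) = 4 * r"
  proof -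
    have "(\<Sum>k\<in>K. \<Sum>l\<in>K. a l k) = (\<Sum>k\<in>K. r)"
      using reg by (intro sum.cong) (auto simp: col d_def)
    then show ?thesis using card by simp
  qed
  have extremal: "a k l = d k / 4" if "d k = 0 \<or> d k = 4" and "l \<in> K" for k l
    using zero_one_eq_if_sum_extremal[of K "a k"] K finite_subset a01 that card
    unfolding d_def by auto
  have "(switching_matrix N K * mat N N (\<lambda>(i,j). a i j) * switching_matrix N K) $$ (i,j) = ?b (i,j)"
  proof (cases "i \<in> K"; cases "j \<in> K")
    assume "i \<in> K" "j \<in> K"
    then show ?thesis using reg[of i] reg[of j] col[of j, unfolded d_def]
      by (simp add: switching_matrix_conj_entry[OF K i j] total)
  next
    assume iK: "i \<in> K" and jK: "j \<notin> K"
    then show ?thesis using out[OF j jK] extremal[of j i] sym[of i j]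
      by (auto simp: switching_matrix_conj_entry[OF K i j] col d_def)
  next
    assume iK: "i \<notin> K" and jK: "j \<in> K"
    then show ?thesis using out[OF i iK] extremal[of i j]
      by (auto simp: switching_matrix_conj_entry[OF K i j] d_def)
  next
    assume "i \<notin> K" "j \<notin> K"
    then show ?thesis by (simp add: switching_matrix_conj_entry[OF K i j])
  qed
  then show "(switching_matrix N K * mat N N (\<lambda>(i,j). a i j) * switching_matrix N K) $$ (i,j) = mat N N ?b $$ (i,j)"
    using i j by simp
qed (simp_all add: switching_matrix_def)

definition nbrs_in :: "'a set \<Rightarrow> ('a \<Rightarrow> 'a \<Rightarrow> bool) \<Rightarrow> 'a \<Rightarrow> nat" where
  "nbrs_in C E v = card {c \<in> C. E v c}"

definition gm_switch :: "'a set \<Rightarrow> ('a \<Rightarrow> 'a \<Rightarrow> bool) \<Rightarrow> 'a \<Rightarrow> 'a \<Rightarrow> bool" where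
  "gm_switch C E u v \<longleftrightarrow>
     (if (u \<in> C \<and> v \<notin> C \<and> nbrs_in C E v = 2) \<or> (v \<in> C \<and> u \<notin> C \<and> nbrs_in C E u = 2)
      then \<not> E u v else E u v)"

lemma bij_betw_nth_sorted_list_of_set:
  fixes V :: "'a::linorder set"
  assumes "finite V" and "C \<subseteq> V"
  shows "bij_betw (nth (sorted_list_of_set V))
    {k. k < length (sorted_list_of_set V) \<and> sorted_list_of_set V ! k \<in> C} C"
proof (rule bij_betw_imageI)
  show "inj_on (nth (sorted_list_of_set V)) {k. k < length (sorted_list_of_set V) \<and> sorted_list_of_set V ! k \<in> C}"
    by (auto simp: inj_on_def nth_eq_iff_index_eq)
  show "nth (sorted_list_of_set V) ` {k. k < length (sorted_list_of_set V) \<and> sorted_list_of_set V ! k \<in> C} = C"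
  proof (intro equalityI subsetI)
    fix c assume "c \<in> C"
    then have "c \<in> set (sorted_list_of_set V)" using assms by auto
    then obtain k where "k < length (sorted_list_of_set V)" "sorted_list_of_set V ! k = c"
      by (auto simp: in_set_conv_nth)
    with \<open>c \<in> C\<close> show "c \<in> nth (sorted_list_of_set V) `
        {k. k < length (sorted_list_of_set V) \<and> sorted_list_of_set V ! k \<in> C}" by force
  qed auto
qed

lemma char_poly_gm_switch:
  fixes V :: "'a::linorder set"
  assumes V: "finite V" and CV: "C \<subseteq> V" and card: "card C = 4"
    and sym: "\<And>x y. E x y \<Longrightarrow> E y x"
    and reg: "\<And>c. c \<in> C \<Longrightarrow> nbrs_in C E c = r"
    and out: "\<And>v. v \<in> V \<Longrightarrow> v \<notin> C \<Longrightarrow> nbrs_in C E v \<in> {0, 2, 4}"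
  shows "char_poly (adj_matrix V (gm_switch C E)) = char_poly (adj_matrix V E)"
proof -
  define vs where "vs = sorted_list_of_set V"
  define N where "N = length vs"
  have set_vs: "set vs = V" using V by (simp add: vs_def)
  define a where "a i j = (if i < N \<and> j < N \<and> E (vs!i) (vs!j) then 1 else (0::real))" for i j
  define K where "K = {k. k < N \<and> vs!k \<in> C}"
  have K: "K \<subseteq> {..<N}" by (auto simp: K_def)
  have bij: "bij_betw (nth vs) K C"
    unfolding K_def N_def vs_def by (rule bij_betw_nth_sorted_list_of_set[OF V CV])
  have card_K: "card K = 4" using bij_betw_same_card[OF bij] card by simp
  have row_sum: "(\<Sum>l\<in>K. a k l) = real (nbrs_in C E (vs!k))" if k: "k < N" for k
  proof -
    have "(\<Sum>l\<in>K. a k l) = (\<Sum>l\<in>K. (\<lambda>c. if E (vs!k) c then 1 else (0::real)) (vs!l))"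
      using k by (intro sum.cong) (auto simp: a_def K_def)
    also have "\<dots> = (\<Sum>c\<in>C. if E (vs!k) c then 1 else (0::real))"
      using sum.reindex_bij_betw[OF bij] by simp
    also have "\<dots> = real (nbrs_in C E (vs!k))"
      using finite_subset[OF CV V] by (simp add: sum.If_cases Int_def conj_commute nbrs_in_def)
    finally show ?thesis .
  qed
  have a01: "a i j = 0 \<or> a i j = 1" for i j by (simp add: a_def)
  have a_sym: "a i j = a j i" for i j using sym by (auto simp: a_def)
  have a_reg: "(\<Sum>l\<in>K. a k l) = real r" if "k \<in> K" for k
    using that row_sum reg by (auto simp: K_def)
  have a_out: "(\<Sum>l\<in>K. a k l) \<in> {0, 2, 4}" if "k < N" "k \<notin> K" for k
    using that out[of "vs!k"] row_sum[OF that(1)] set_vs by (auto simp: K_def N_def)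
  have A: "adj_matrix V E = mat N N (\<lambda>(i,j). a i j)"
    unfolding adj_matrix_def Let_def vs_def[symmetric] N_def[symmetric]
    by (rule cong_mat) (auto simp: a_def)
  have B: "adj_matrix V (gm_switch C E) = mat N N (\<lambda>(i,j).
      if (i \<in> K \<and> j \<notin> K \<and> (\<Sum>l\<in>K. a j l) = 2) \<or> (j \<in> K \<and> i \<notin> K \<and> (\<Sum>l\<in>K. a i l) = 2)
      then 1 - a i j else a i j)"
    unfolding adj_matrix_def Let_def vs_def[symmetric] N_def[symmetric]
    by (rule cong_mat) (simp_all add: row_sum, auto simp: a_def K_def gm_switch_def)
  have "similar_mat (adj_matrix V (gm_switch C E)) (adj_matrix V E)"
  proof (rule similar_matI)
    show "{adj_matrix V (gm_switch C E), adj_matrix V E, switching_matrix N K, switching_matrix N K}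
        \<subseteq> carrier_mat N N"
      by (auto simp: A B switching_matrix_carrier)
    show "switching_matrix N K * switching_matrix N K = 1\<^sub>m N"
      by (rule switching_matrix_involution[OF K card_K])
    show "adj_matrix V (gm_switch C E) = switching_matrix N K * adj_matrix V E * switching_matrix N K"
      unfolding A B by (rule switching_matrix_conj[OF K card_K a01 a_sym a_reg a_out, symmetric])
  qed (rule switching_matrix_involution[OF K card_K])
  then show ?thesis by (rule char_poly_similar)
qed

lemma not_DS_if_not_iso_gm_switch:
  fixes V :: "'a::linorder set"
  assumes G: "simple_graph V E" and CV: "C \<subseteq> V" and card: "card C = 4"
    and reg: "\<And>c. c \<in> C \<Longrightarrow> nbrs_in C E c = r"
    and out: "\<And>v. v \<in> V \<Longrightarrow> v \<notin> C \<Longrightarrow> nbrs_in C E v \<in> {0, 2, 4}"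
    and not_iso: "\<not> graph_iso V E V (gm_switch C E)"
  shows "\<not> DS V E"
proof
  assume DS: "DS V E"
  \<comment> \<open>\<open>DS\<close> only speaks about graphs on \<open>nat\<close>: transport the switched graph to \<open>{0..<N}\<close>.\<close>
  have V: "finite V" and sym: "\<And>x y. E x y \<Longrightarrow> E y x" and irrefl: "\<And>x. \<not> E x x"
    using G by (auto simp: simple_graph_def)
  define vs where "vs = sorted_list_of_set V"
  define N where "N = length vs"
  have dist: "distinct vs" and set_vs: "set vs = V" using V by (auto simp: vs_def)
  define F where "F i j \<longleftrightarrow> i < N \<and> j < N \<and> gm_switch C E (vs!i) (vs!j)" for i j
  have "simple_graph {0..<N} F"
    using sym irrefl by (auto simp: simple_graph_def F_def gm_switch_def)
  moreover have "adj_matrix {0..<N} F = adj_matrix V (gm_switch C E)"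
    unfolding adj_matrix_def Let_def vs_def[symmetric] N_def[symmetric]
    by (intro cong_mat) (auto simp: F_def)
  then have "cospectral V E {0..<N} F"
    unfolding cospectral_def using char_poly_gm_switch[OF V CV card sym reg out] by simp
  ultimately obtain f where f: "bij_betw f V {0..<N}" and f_iso: "\<forall>x\<in>V. \<forall>y\<in>V. E x y \<longleftrightarrow> F (f x) (f y)"
    using DS unfolding DS_def graph_iso_def by blast
  have "bij_betw (nth vs) {0..<N} V"
    using dist set_vs by (simp add: bij_betw_nth N_def atLeast0LessThan)
  then have "bij_betw (\<lambda>x. vs ! f x) V V"
    using bij_betw_trans[OF f] by (simp add: comp_def)
  moreover have "\<forall>x\<in>V. \<forall>y\<in>V. E x y \<longleftrightarrow> gm_switch C E (vs ! f x) (vs ! f y)"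
    using f_iso f by (auto simp: F_def bij_betw_def)
  ultimately show False using not_iso unfolding graph_iso_def by blast
qed

section \<open>Common neighbourhoods of edges\<close>

definition common_nbhds_three_cliques :: "'a set \<Rightarrow> ('a \<Rightarrow> 'a \<Rightarrow> bool) \<Rightarrow> bool" where
  "common_nbhds_three_cliques V E \<longleftrightarrow> (\<forall>x\<in>V. \<forall>y\<in>V. E x y \<longrightarrow> (\<exists>cl :: 'a \<Rightarrow> nat.
     \<forall>z\<in>V. \<forall>z'\<in>V. E x z \<and> E y z \<and> E x z' \<and> E y z' \<longrightarrow>
       cl z < 3 \<and> (z \<noteq> z' \<longrightarrow> (E z z' \<longleftrightarrow> cl z = cl z'))))"

lemma graph_iso_common_nbhds_three_cliques:
  assumes iso: "graph_iso V E W F" and three: "common_nbhds_three_cliques V E"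
  shows "common_nbhds_three_cliques W F"
  unfolding common_nbhds_three_cliques_def
proof (intro ballI impI)
  fix u v assume u: "u \<in> W" and v: "v \<in> W" and "F u v"
  obtain f where f: "bij_betw f V W" and f_iso: "\<forall>x\<in>V. \<forall>y\<in>V. E x y \<longleftrightarrow> F (f x) (f y)"
    using iso unfolding graph_iso_def by blast
  define g where "g = inv_into V f"
  have g: "g w \<in> V" "f (g w) = w" if "w \<in> W" for w
    using that f unfolding g_def by (auto simp: bij_betw_def inv_into_into f_inv_into_f)
  have F_iff: "F w w' \<longleftrightarrow> E (g w) (g w')" if "w \<in> W" "w' \<in> W" for w w'
    using that g f_iso by metis
  have "E (g u) (g v)" using F_iff u v \<open>F u v\<close> by simp
  then obtain cl :: "_ \<Rightarrow> nat" where cl: "\<forall>z\<in>V. \<forall>z'\<in>V. E (g u) z \<and> E (g v) z \<and> E (g u) z' \<and> E (g v) z' \<longrightarrow>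
      cl z < 3 \<and> (z \<noteq> z' \<longrightarrow> (E z z' \<longleftrightarrow> cl z = cl z'))"
    using three g(1)[OF u] g(1)[OF v] unfolding common_nbhds_three_cliques_def by blast
  show "\<exists>cl :: _ \<Rightarrow> nat. \<forall>z\<in>W. \<forall>z'\<in>W. F u z \<and> F v z \<and> F u z' \<and> F v z' \<longrightarrow>
      cl z < 3 \<and> (z \<noteq> z' \<longrightarrow> (F z z' \<longleftrightarrow> cl z = cl z'))"
  proof (rule exI[of _ "cl \<circ> g"], intro ballI impI)
    fix z z' assume z: "z \<in> W" and z': "z' \<in> W" and nbrs: "F u z \<and> F v z \<and> F u z' \<and> F v z'"
    have "E (g u) (g z) \<and> E (g v) (g z) \<and> E (g u) (g z') \<and> E (g v) (g z')"
      using nbrs F_iff u v z z' by simp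
    moreover have "g z \<noteq> g z'" if "z \<noteq> z'" using that g z z' by metis
    ultimately show "(cl \<circ> g) z < 3 \<and> (z \<noteq> z' \<longrightarrow> (F z z' \<longleftrightarrow> (cl \<circ> g) z = (cl \<circ> g) z'))"
      using cl g(1)[OF z] g(1)[OF z'] F_iff[OF z z'] by auto
  qed
qed

lemma not_common_nbhds_three_cliques_path:
  assumes "x \<in> V" "y \<in> V" "a \<in> V" "b \<in> V" "c \<in> V"
    and "E x y" "E x a" "E y a" "E x b" "E y b" "E x c" "E y c"
    and "E a b" "E b c" "\<not> E a c" "a \<noteq> c"
  shows "\<not> common_nbhds_three_cliques V E"
proof
  assume "common_nbhds_three_cliques V E"
  then obtain cl :: "_ \<Rightarrow> nat" where cl: "\<forall>z\<in>V. \<forall>z'\<in>V. E x z \<and> E y z \<and> E x z' \<and> E y z' \<longrightarrow>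
      cl z < 3 \<and> (z \<noteq> z' \<longrightarrow> (E z z' \<longleftrightarrow> cl z = cl z'))"
    using assms(1,2,6) unfolding common_nbhds_three_cliques_def by blast
  have "cl a = cl b" using cl[rule_format, of a b] assms by (cases "a = b") auto
  moreover have "cl b = cl c" using cl[rule_format, of b c] assms by (cases "b = c") auto
  moreover have "cl a \<noteq> cl c" using cl[rule_format, of a c] assms by auto
  ultimately show False by simp
qed

lemma not_common_nbhds_three_cliques_indep4:
  assumes "x \<in> V" "y \<in> V" "a \<in> V" "b \<in> V" "c \<in> V" "d \<in> V"
    and "E x y" "E x a" "E y a" "E x b" "E y b" "E x c" "E y c" "E x d" "E y d"
    and "a \<noteq> b" "a \<noteq> c" "a \<noteq> d" "b \<noteq> c" "b \<noteq> d" "c \<noteq> d"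
    and "\<not> E a b" "\<not> E a c" "\<not> E a d" "\<not> E b c" "\<not> E b d" "\<not> E c d"
  shows "\<not> common_nbhds_three_cliques V E"
proof
  assume "common_nbhds_three_cliques V E"
  then obtain cl :: "_ \<Rightarrow> nat" where cl: "\<forall>z\<in>V. \<forall>z'\<in>V. E x z \<and> E y z \<and> E x z' \<and> E y z' \<longrightarrow>
      cl z < 3 \<and> (z \<noteq> z' \<longrightarrow> (E z z' \<longleftrightarrow> cl z = cl z'))"
    using assms(1,2,7) unfolding common_nbhds_three_cliques_def by blast
  have "cl a < 3" "cl b < 3" "cl c < 3" "cl d < 3"
    using cl assms by blast+
  moreover have "cl a \<noteq> cl b" "cl a \<noteq> cl c" "cl a \<noteq> cl d" "cl b \<noteq> cl c" "cl b \<noteq> cl d" "cl c \<noteq> cl d"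
    using cl assms by blast+
  ultimately show False by (simp add: numeral_3_eq_3 less_Suc_eq)
qed

section \<open>Local structure of \<open>SR(m,n)\<close>\<close>

definition diff_coords :: "nat \<Rightarrow> nat list \<Rightarrow> nat list \<Rightarrow> nat set" where
  "diff_coords m x y = {i. i < m \<and> x!i \<noteq> y!i}"

lemma finite_diff_coords [simp]: "finite (diff_coords m x y)"
  by (rule finite_subset[of _ "{..<m}"]) (auto simp: diff_coords_def)

lemma diff_coords_commute: "diff_coords m x y = diff_coords m y x"
  by (auto simp: diff_coords_def)

lemma diff_coords_triangle: "diff_coords m x z \<subseteq> diff_coords m x y \<union> diff_coords m y z"
  by (auto simp: diff_coords_def)

lemma SR_adj_iff_diff_coords:
  "SR_adj m n x y \<longleftrightarrow> x \<in> SR_verts m n \<and> y \<in> SR_verts m n \<and> card (diff_coords m x y) = 2"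
  by (simp add: SR_adj_def diff_coords_def)

lemma SR_adj_sym: "SR_adj m n x y \<Longrightarrow> SR_adj m n y x"
  by (simp add: SR_adj_iff_diff_coords diff_coords_commute)

lemma SR_adj_irrefl: "\<not> SR_adj m n x x"
  by (simp add: SR_adj_iff_diff_coords diff_coords_def)

lemma finite_SR_verts: "finite (SR_verts m n)"
proof (rule finite_subset)
  show "SR_verts m n \<subseteq> {xs. set xs \<subseteq> {..n} \<and> length xs = m}"
    by (auto simp: SR_verts_def member_le_sum_list)
qed (simp add: finite_lists_length_eq)

lemma simple_graph_SR: "simple_graph (SR_verts m n) (SR_adj m n)"
  using finite_SR_verts SR_adj_sym SR_adj_irrefl by (auto simp: simple_graph_def SR_adj_def)

lemma doubleton_eq_if_card_2: "card A = 2 \<Longrightarrow> a \<in> A \<Longrightarrow> b \<in> A \<Longrightarrow> a \<noteq> b \<Longrightarrow> A = {a, b}"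
  unfolding card_2_iff by auto

lemma card_2_obtain: "card A = 2 \<Longrightarrow> a \<in> A \<Longrightarrow> \<exists>b. A = {a, b}"
  unfolding card_2_iff by auto

lemma sum_eq_if_diff_coords_subset:
  assumes x: "x \<in> SR_verts m n" and y: "y \<in> SR_verts m n"
    and S: "S \<subseteq> {..<m}" and D: "diff_coords m x y \<subseteq> S"
  shows "(\<Sum>k\<in>S. x!k) = (\<Sum>k\<in>S. y!k)"
proof -
  have split: "n = (\<Sum>k\<in>S. z!k) + (\<Sum>k\<in>{..<m} - S. z!k)" if "z \<in> SR_verts m n" for z
  proof -
    have "n = (\<Sum>k<m. z!k)"
      using that by (auto simp: SR_verts_def sum_list_sum_nth lessThan_atLeast0)
    then show ?thesis
      using S by (simp add: sum.subset_diff[of S "{..<m}"] add.commute)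
  qed
  have "(\<Sum>k\<in>{..<m} - S. x!k) = (\<Sum>k\<in>{..<m} - S. y!k)"
    using D by (intro sum.cong) (auto simp: diff_coords_def)
  then show ?thesis using split[OF x] split[OF y] by simp
qed

lemma sum_two_eq_if_diff_coords_subset:
  assumes "x \<in> SR_verts m n" "y \<in> SR_verts m n" "i < m" "j < m" "i \<noteq> j"
    and "diff_coords m x y \<subseteq> {i, j}"
  shows "x!i + x!j = y!i + y!j"
  using sum_eq_if_diff_coords_subset[OF assms(1,2), of "{i,j}"] assms(3-6) by simp

lemma eq_if_diff_coords_empty:
  assumes "x \<in> SR_verts m n" "y \<in> SR_verts m n" "diff_coords m x y = {}"
  shows "x = y"
  using assms by (intro nth_equalityI) (auto simp: SR_verts_def diff_coords_def)

lemma diff_coords_ne_singleton: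
  assumes "x \<in> SR_verts m n" "y \<in> SR_verts m n"
  shows "diff_coords m x y \<noteq> {k}"
proof
  assume D: "diff_coords m x y = {k}"
  then have "k < m" "x!k \<noteq> y!k" by (auto simp: diff_coords_def)
  moreover have "(\<Sum>l\<in>{k}. x!l) = (\<Sum>l\<in>{k}. y!l)"
    using sum_eq_if_diff_coords_subset[OF assms, of "{k}"] D \<open>k < m\<close> by simp
  ultimately show False by simp
qed

lemma SR_adj_if_diff_coords_subset:
  assumes x: "x \<in> SR_verts m n" and y: "y \<in> SR_verts m n" and "x \<noteq> y"
    and D: "diff_coords m x y \<subseteq> {k, l}"
  shows "SR_adj m n x y"
proof -
  have "diff_coords m x y \<noteq> {}" using eq_if_diff_coords_empty[OF x y] \<open>x \<noteq> y\<close> by blast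
  moreover have "diff_coords m x y \<noteq> {k}" "diff_coords m x y \<noteq> {l}"
    using diff_coords_ne_singleton[OF x y] by blast+
  ultimately have "diff_coords m x y = {k, l}" "k \<noteq> l" using D by auto
  then show ?thesis using x y by (simp add: SR_adj_iff_diff_coords)
qed

definition edge_class :: "nat list \<Rightarrow> nat list \<Rightarrow> nat \<Rightarrow> nat list \<Rightarrow> nat" where
  "edge_class x y i z = (if z!i = y!i then 1 else if z!i = x!i then 2 else 0)"

locale SR_edge =
  fixes m n :: nat and x y :: "nat list" and i j :: nat
  assumes x_in: "x \<in> SR_verts m n" and y_in: "y \<in> SR_verts m n"
    and diff_xy: "diff_coords m x y = {i, j}" and i_ne_j: "i \<noteq> j"
begin

lemma coords: "i < m" "j < m" "x!i \<noteq> y!i" "x!j \<noteq> y!j"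
  using diff_xy by (auto simp: diff_coords_def set_eq_iff)

lemma sum_ij: "x!i + x!j = y!i + y!j"
  using sum_two_eq_if_diff_coords_subset[OF x_in y_in coords(1,2) i_ne_j] diff_xy by simp

lemma swap: "SR_edge m n y x i j"
  using x_in y_in diff_xy i_ne_j by unfold_locales (simp_all add: diff_coords_commute)

lemma common_nbr_fresh:
  assumes xz: "SR_adj m n x z" and yz: "SR_adj m n y z" and "z!i \<noteq> x!i" "z!i \<noteq> y!i"
  shows "diff_coords m x z = {i, j}"
proof -
  have z: "z \<in> SR_verts m n" and card: "card (diff_coords m x z) = 2" "card (diff_coords m y z) = 2"
    using xz yz by (auto simp: SR_adj_iff_diff_coords)
  have i: "i \<in> diff_coords m x z" "i \<in> diff_coords m y z"
    using assms coords by (auto simp: diff_coords_def)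
  have "j \<in> diff_coords m x z"
  proof (rule ccontr)
    assume "j \<notin> diff_coords m x z"
    then have zj: "z!j = x!j" using coords by (simp add: diff_coords_def)
    then have "j \<in> diff_coords m y z" using coords by (simp add: diff_coords_def)
    then have "diff_coords m y z = {i, j}" using doubleton_eq_if_card_2[OF card(2) i(2)] i_ne_j by blast
    then have "y!i + y!j = z!i + z!j"
      using sum_two_eq_if_diff_coords_subset[OF y_in z coords(1,2) i_ne_j] by simp
    then show False using zj sum_ij \<open>z!i \<noteq> x!i\<close> by simp
  qed
  then show ?thesis using doubleton_eq_if_card_2[OF card(1) i(1)] i_ne_j by blast
qed

lemma common_nbr_takes_y:
  assumes xz: "SR_adj m n x z" and yz: "SR_adj m n y z" and zi: "z!i = y!i"
  shows "z!j = x!j"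
proof (rule ccontr)
  assume zj: "z!j \<noteq> x!j"
  have z: "z \<in> SR_verts m n" and card: "card (diff_coords m x z) = 2"
    using xz by (auto simp: SR_adj_iff_diff_coords)
  have "i \<in> diff_coords m x z" "j \<in> diff_coords m x z"
    using zi zj coords by (auto simp: diff_coords_def)
  then have D: "diff_coords m x z = {i, j}" using doubleton_eq_if_card_2[OF card] i_ne_j by blast
  then have zj': "z!j = y!j"
    using sum_two_eq_if_diff_coords_subset[OF x_in z coords(1,2) i_ne_j] sum_ij zi by simp
  have "y!k = z!k" if "k < m" for k
  proof (cases "k = i \<or> k = j")
    case True
    then show ?thesis using zi zj' by auto
  next
    case False
    then have "k \<notin> diff_coords m x y" "k \<notin> diff_coords m x z" using diff_xy D by auto
    then show ?thesis using that by (simp add: diff_coords_def)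
  qed
  then have "z = y" using y_in z by (intro nth_equalityI) (auto simp: SR_verts_def)
  then show False using yz SR_adj_irrefl by simp
qed

lemma common_nbr_coords:
  assumes xz: "SR_adj m n x z" and yz: "SR_adj m n y z"
  shows "(z!i = y!i \<longrightarrow> z!j = x!j) \<and> (z!i = x!i \<longrightarrow> z!j = y!j)
    \<and> (z!i \<noteq> x!i \<and> z!i \<noteq> y!i \<longrightarrow> z!i + z!j = x!i + x!j)"
proof (intro conjI impI)
  show "z!j = x!j" if "z!i = y!i" using common_nbr_takes_y[OF xz yz that] .
  show "z!j = y!j" if "z!i = x!i" using SR_edge.common_nbr_takes_y[OF swap yz xz that] .
  assume "z!i \<noteq> x!i \<and> z!i \<noteq> y!i"
  then have "diff_coords m x z = {i, j}" using common_nbr_fresh[OF xz yz] by blast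
  moreover have "z \<in> SR_verts m n" using xz by (simp add: SR_adj_iff_diff_coords)
  ultimately show "z!i + z!j = x!i + x!j"
    using sum_two_eq_if_diff_coords_subset[OF x_in _ coords(1,2) i_ne_j] by simp
qed

lemma common_nbrs_same_change_adj:
  assumes xz: "SR_adj m n x z" and xz': "SR_adj m n x z'" and "z \<noteq> z'"
    and "z!i \<noteq> x!i" and "z'!i = z!i"
  shows "SR_adj m n z z'"
proof -
  have z: "z \<in> SR_verts m n" and z': "z' \<in> SR_verts m n"
    and card: "card (diff_coords m x z) = 2" "card (diff_coords m x z') = 2"
    using xz xz' by (auto simp: SR_adj_iff_diff_coords)
  have "i \<in> diff_coords m x z" "i \<in> diff_coords m x z'"
    using assms coords by (auto simp: diff_coords_def)
  then obtain k k' where "diff_coords m x z = {i, k}" "diff_coords m x z' = {i, k'}"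
    using card card_2_obtain by metis
  moreover have "i \<notin> diff_coords m z z'" using assms by (simp add: diff_coords_def)
  ultimately have "diff_coords m z z' \<subseteq> {k, k'}"
    using diff_coords_triangle[of m z z' x] diff_coords_commute[of m z x] by auto
  then show ?thesis using SR_adj_if_diff_coords_subset[OF z z' \<open>z \<noteq> z'\<close>] by blast
qed

lemma common_nbrs_same_class_adj:
  assumes xz: "SR_adj m n x z" and yz: "SR_adj m n y z"
    and xz': "SR_adj m n x z'" and yz': "SR_adj m n y z'"
    and "z \<noteq> z'" and cls: "edge_class x y i z = edge_class x y i z'"
  shows "SR_adj m n z z'"
proof -
  consider "z!i = y!i" "z'!i = y!i" | "z!i = x!i" "z'!i = x!i"
    | "z!i \<noteq> x!i" "z!i \<noteq> y!i" "z'!i \<noteq> x!i" "z'!i \<noteq> y!i"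
    using cls coords(3) by (auto simp: edge_class_def split: if_splits)
  then show ?thesis
  proof cases
    case 1
    then show ?thesis using common_nbrs_same_change_adj[OF xz xz' \<open>z \<noteq> z'\<close>] coords(3) by simp
  next
    case 2
    then show ?thesis
      using SR_edge.common_nbrs_same_change_adj[OF swap yz yz' \<open>z \<noteq> z'\<close>] coords(3) by simp
  next
    case 3
    then have "diff_coords m x z = {i, j}" "diff_coords m x z' = {i, j}"
      using common_nbr_fresh xz yz xz' yz' by blast+
    then have "diff_coords m z z' \<subseteq> {i, j}"
      using diff_coords_triangle[of m z z' x] diff_coords_commute[of m z x] by auto
    moreover have "z \<in> SR_verts m n" "z' \<in> SR_verts m n"
      using xz xz' by (auto simp: SR_adj_iff_diff_coords)
    ultimately show ?thesis using SR_adj_if_diff_coords_subset \<open>z \<noteq> z'\<close> by blast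
  qed
qed

lemma common_nbrs_diff_class_not_adj:
  assumes xz: "SR_adj m n x z" and yz: "SR_adj m n y z"
    and xz': "SR_adj m n x z'" and yz': "SR_adj m n y z'"
    and cls: "edge_class x y i z \<noteq> edge_class x y i z'"
  shows "\<not> SR_adj m n z z'"
proof
  assume zz': "SR_adj m n z z'"
  have "z!i \<noteq> z'!i \<and> z!j \<noteq> z'!j \<and> z!i + z!j \<noteq> z'!i + z'!j"
    using common_nbr_coords[OF xz yz] common_nbr_coords[OF xz' yz'] cls coords(3,4) sum_ij
    unfolding edge_class_def by (auto split: if_splits)
  then have ij: "i \<in> diff_coords m z z'" "j \<in> diff_coords m z z'" and sums: "z!i + z!j \<noteq> z'!i + z'!j"
    using coords by (auto simp: diff_coords_def)
  have "diff_coords m z z' = {i, j}"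
    using doubleton_eq_if_card_2[OF _ ij i_ne_j] zz' by (simp add: SR_adj_iff_diff_coords)
  then show False
    using sum_two_eq_if_diff_coords_subset[of z m n z' i j] zz' coords sums i_ne_j
    by (simp add: SR_adj_iff_diff_coords)
qed

end

lemma SR_common_nbhds_three_cliques: "common_nbhds_three_cliques (SR_verts m n) (SR_adj m n)"
  unfolding common_nbhds_three_cliques_def
proof (intro ballI impI)
  fix x y assume "x \<in> SR_verts m n" "y \<in> SR_verts m n" and xy: "SR_adj m n x y"
  then obtain i j where "diff_coords m x y = {i, j}" "i \<noteq> j"
    by (auto simp: SR_adj_iff_diff_coords card_2_iff)
  then interpret SR_edge m n x y i j
    using xy by unfold_locales (auto simp: SR_adj_iff_diff_coords)
  show "\<exists>cl :: _ \<Rightarrow> nat. \<forall>z\<in>SR_verts m n. \<forall>z'\<in>SR_verts m n.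
      SR_adj m n x z \<and> SR_adj m n y z \<and> SR_adj m n x z' \<and> SR_adj m n y z' \<longrightarrow>
      cl z < 3 \<and> (z \<noteq> z' \<longrightarrow> (SR_adj m n z z' \<longleftrightarrow> cl z = cl z'))"
  proof (rule exI[of _ "edge_class x y i"], intro ballI impI conjI)
    fix z z' assume "SR_adj m n x z \<and> SR_adj m n y z \<and> SR_adj m n x z' \<and> SR_adj m n y z'" "z \<noteq> z'"
    then show "SR_adj m n z z' \<longleftrightarrow> edge_class x y i z = edge_class x y i z'"
      using common_nbrs_same_class_adj common_nbrs_diff_class_not_adj by blast
  qed (simp add: edge_class_def)
qed

section \<open>Switching sets in \<open>SR(m,n)\<close>\<close>

lemma not_DS_SR_if_gm_switch_not_three_cliques:
  assumes "C \<subseteq> SR_verts m n" and "card C = 4"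
    and "\<And>c. c \<in> C \<Longrightarrow> nbrs_in C (SR_adj m n) c = r"
    and "\<And>v. v \<in> SR_verts m n \<Longrightarrow> v \<notin> C \<Longrightarrow> nbrs_in C (SR_adj m n) v \<in> {0, 2, 4}"
    and "\<not> common_nbhds_three_cliques (SR_verts m n) (gm_switch C (SR_adj m n))"
  shows "\<not> DS (SR_verts m n) (SR_adj m n)"
  using not_DS_if_not_iso_gm_switch[OF simple_graph_SR assms(1-4)] assms(5)
    graph_iso_common_nbhds_three_cliques SR_common_nbhds_three_cliques by blast

fun hamming :: "nat list \<Rightarrow> nat list \<Rightarrow> nat" where
  "hamming (a # xs) (b # ys) = of_bool (a \<noteq> b) + hamming xs ys"
| "hamming _ _ = 0"

lemma diff_coords_Cons:
  "diff_coords (Suc m) (a # xs) (b # ys) = (if a = b then {} else {0}) \<union> Suc ` diff_coords m xs ys"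
  by (auto simp: diff_coords_def nth_Cons' image_iff split: if_splits)
    (metis Suc_less_eq Suc_pred gr0I nth_Cons_pos)+

lemma card_diff_coords_eq_hamming:
  "length xs = length ys \<Longrightarrow> card (diff_coords (length xs) xs ys) = hamming xs ys"
proof (induction xs ys rule: list_induct2)
  case Nil
  then show ?case by (simp add: diff_coords_def)
next
  case (Cons a xs b ys)
  have "card (Suc ` diff_coords (length xs) xs ys) = card (diff_coords (length xs) xs ys)"
    by (rule card_image) simp
  moreover have "0 \<notin> Suc ` diff_coords (length xs) xs ys" by auto
  ultimately show ?case using Cons by (simp add: diff_coords_Cons)
qed

lemma SR_adj_iff_hamming:
  "SR_adj m n x y \<longleftrightarrow>
     length x = m \<and> sum_list x = n \<and> length y = m \<and> sum_list y = n \<and> hamming x y = 2"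
  using card_diff_coords_eq_hamming[of x y] by (auto simp: SR_adj_iff_diff_coords SR_verts_def)

lemma hamming_self [simp]: "hamming xs xs = 0"
  by (induction xs) auto

lemma hamming_append_same: "length xs = length ys \<Longrightarrow> hamming (xs @ zs) (ys @ zs) = hamming xs ys"
  by (induction xs ys rule: list_induct2) auto

lemma card_filter_four:
  assumes "distinct [c1, c2, c3, c4]"
  shows "card {c \<in> {c1, c2, c3, c4}. P c} = of_bool (P c1) + of_bool (P c2) + of_bool (P c3) + of_bool (P c4)"
proof -
  have "{c \<in> {c1, c2, c3, c4}. P c} =
      (if P c1 then {c1} else {}) \<union> (if P c2 then {c2} else {}) \<union> (if P c3 then {c3} else {}) \<union> (if P c4 then {c4} else {})"
    by auto
  then show ?thesis using assms by (auto simp: card_insert_if)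
qed

lemma length_4_cases: "length v = 4 \<Longrightarrow> \<exists>a b c d. v = [a, b, c, d]"
  by (simp add: length_Suc_conv numeral_eq_Suc) blast

definition SR44_switching_set :: "nat list set" where
  "SR44_switching_set = {[0,1,1,2], [0,1,2,1], [0,2,1,1], [1,1,1,1]}"

lemma nbrs_in_SR44_switching_set:
  "nbrs_in SR44_switching_set (SR_adj 4 4) v =
     of_bool (SR_adj 4 4 v [0,1,1,2]) + of_bool (SR_adj 4 4 v [0,1,2,1])
     + of_bool (SR_adj 4 4 v [0,2,1,1]) + of_bool (SR_adj 4 4 v [1,1,1,1])"
  unfolding nbrs_in_def SR44_switching_set_def by (rule card_filter_four) simp

lemma not_DS_SR44: "\<not> DS (SR_verts 4 4) (SR_adj 4 4)"
proof (rule not_DS_SR_if_gm_switch_not_three_cliques[where C = SR44_switching_set and r = 3])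
  show "SR44_switching_set \<subseteq> SR_verts 4 4" "card SR44_switching_set = 4"
    by (simp_all add: SR44_switching_set_def SR_verts_def)
  show "nbrs_in SR44_switching_set (SR_adj 4 4) c = 3" if "c \<in> SR44_switching_set" for c
    using that unfolding nbrs_in_SR44_switching_set
    by (auto simp: SR44_switching_set_def SR_adj_iff_hamming)
  show "nbrs_in SR44_switching_set (SR_adj 4 4) v \<in> {0, 2, 4}"
    if v: "v \<in> SR_verts 4 4" "v \<notin> SR44_switching_set" for v
  proof -
    obtain a b c d where v_eq: "v = [a, b, c, d]" using length_4_cases[of v] v by (auto simp: SR_verts_def)
    then have d: "d = 4 - a - b - c" and "a + b + c \<le> 4" using v by (auto simp: SR_verts_def)
    then have "a = 0 \<or> a = 1 \<or> a = 2 \<or> a = 3 \<or> a = 4" "b = 0 \<or> b = 1 \<or> b = 2 \<or> b = 3 \<or> b = 4"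
      "c = 0 \<or> c = 1 \<or> c = 2 \<or> c = 3 \<or> c = 4"
      by arith+
    then show ?thesis using \<open>a + b + c \<le> 4\<close> v(2) unfolding v_eq d nbrs_in_SR44_switching_set
      by (elim disjE; simp add: SR_adj_iff_hamming SR44_switching_set_def)
  qed
  show "\<not> common_nbhds_three_cliques (SR_verts 4 4) (gm_switch SR44_switching_set (SR_adj 4 4))"
    by (rule not_common_nbhds_three_cliques_indep4[of
          "[0,0,1,3]" _ "[1,0,1,2]" "[0,0,2,2]" "[0,1,2,1]" "[1,0,0,3]" "[3,0,1,0]"])
      (unfold gm_switch_def nbrs_in_SR44_switching_set,
        simp_all add: SR_verts_def SR_adj_iff_hamming SR44_switching_set_def)
qed

definition SR4_corners :: "nat \<Rightarrow> nat list set" where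
  "SR4_corners n = {[n,0,0,0], [0,n,0,0], [0,0,n,0], [0,0,0,n]}"

lemma nbrs_in_SR4_corners:
  "n > 0 \<Longrightarrow> nbrs_in (SR4_corners n) (SR_adj 4 n) v =
     of_bool (SR_adj 4 n v [n,0,0,0]) + of_bool (SR_adj 4 n v [0,n,0,0])
     + of_bool (SR_adj 4 n v [0,0,n,0]) + of_bool (SR_adj 4 n v [0,0,0,n])"
  unfolding nbrs_in_def SR4_corners_def by (rule card_filter_four) simp

lemma not_DS_SR4:
  assumes n: "n \<ge> 5"
  shows "\<not> DS (SR_verts 4 n) (SR_adj 4 n)"
proof (rule not_DS_SR_if_gm_switch_not_three_cliques[where C = "SR4_corners n" and r = 3])
  have n0: "n > 0" using n by simp
  show "SR4_corners n \<subseteq> SR_verts 4 n" "card (SR4_corners n) = 4"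
    using n0 by (simp_all add: SR4_corners_def SR_verts_def)
  show "nbrs_in (SR4_corners n) (SR_adj 4 n) c = 3" if "c \<in> SR4_corners n" for c
    using that n0 unfolding nbrs_in_SR4_corners[OF n0]
    by (auto simp: SR4_corners_def SR_adj_iff_hamming)
  show "nbrs_in (SR4_corners n) (SR_adj 4 n) v \<in> {0, 2, 4}"
    if v: "v \<in> SR_verts 4 n" "v \<notin> SR4_corners n" for v
  proof -
    obtain a b c d where v_eq: "v = [a, b, c, d]" using length_4_cases[of v] v by (auto simp: SR_verts_def)
    then have "a + b + c + d = n" using v by (simp add: SR_verts_def)
    then show ?thesis using v(2) n0 unfolding v_eq nbrs_in_SR4_corners[OF n0]
      by (cases "a = 0"; cases "b = 0"; cases "c = 0"; cases "d = 0")
        (auto simp: SR_adj_iff_hamming SR4_corners_def)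
  qed
  have n_arith: "n - 2 \<noteq> n - 4" "Suc (Suc (n - 2)) = n" "Suc (Suc (Suc (Suc (n - 4)))) = n"
    using n by arith+
  show "\<not> common_nbhds_three_cliques (SR_verts 4 n) (gm_switch (SR4_corners n) (SR_adj 4 n))"
    by (rule not_common_nbhds_three_cliques_indep4[of
          "[0,0,2,n-2]" _ "[0,2,0,n-2]" "[0,1,1,n-2]" "[0,2,2,n-4]" "[2,0,0,n-2]" "[n,0,0,0]"])
      (unfold gm_switch_def nbrs_in_SR4_corners[OF n0],
        use n n_arith in \<open>simp_all add: SR_verts_def SR_adj_iff_hamming SR4_corners_def\<close>)
qed

definition SR_n3_switching_set :: "nat \<Rightarrow> nat list set" where
  "SR_n3_switching_set m = {[3,0,0,0] @ replicate (m - 4) 0, [2,1,0,0] @ replicate (m - 4) 0,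
     [1,2,0,0] @ replicate (m - 4) 0, [0,3,0,0] @ replicate (m - 4) 0}"

lemma nbrs_in_SR_n3_switching_set:
  "nbrs_in (SR_n3_switching_set m) (SR_adj m 3) v =
     of_bool (SR_adj m 3 v ([3,0,0,0] @ replicate (m - 4) 0))
     + of_bool (SR_adj m 3 v ([2,1,0,0] @ replicate (m - 4) 0))
     + of_bool (SR_adj m 3 v ([1,2,0,0] @ replicate (m - 4) 0))
     + of_bool (SR_adj m 3 v ([0,3,0,0] @ replicate (m - 4) 0))"
  unfolding nbrs_in_def SR_n3_switching_set_def by (rule card_filter_four) simp

lemma hamming_replicate_0_eq_0_iff:
  "hamming xs (replicate (length xs) 0) = 0 \<longleftrightarrow> sum_list xs = 0"
  by (induction xs) auto

lemma nbrs_in_SR_n3_switching_set_outside: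
  assumes m: "m \<ge> 4" and v: "v \<in> SR_verts m 3" "v \<notin> SR_n3_switching_set m"
  shows "nbrs_in (SR_n3_switching_set m) (SR_adj m 3) v \<in> {0, 2, 4}"
proof -
  have "m - 2 = Suc (Suc (m - 4))" using m by arith
  then have pad: "[a,b,0,0] @ replicate (m - 4) 0 = a # b # replicate (m - 2) (0::nat)" for a b
    by simp
  obtain p q rest where v_eq: "v = p # q # rest" and len: "length rest = m - 2"
    using v m by (cases v; cases "tl v") (auto simp: SR_verts_def)
  have sum: "p + q + sum_list rest = 3" using v v_eq by (simp add: SR_verts_def)
  define t where "t = hamming rest (replicate (m - 2) 0)"
  have "sum_list rest \<noteq> 0"
  proof
    assume "sum_list rest = 0"
    then have "rest = replicate (m - 2) 0" using len by (intro replicate_eqI) simp_all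
    moreover have "p = 0 \<and> q = 3 \<or> p = 1 \<and> q = 2 \<or> p = 2 \<and> q = 1 \<or> p = 3 \<and> q = 0"
      using sum \<open>sum_list rest = 0\<close> by arith
    ultimately have "v \<in> SR_n3_switching_set m"
      unfolding v_eq SR_n3_switching_set_def pad by auto
    then show False using v(2) by simp
  qed
  then have t: "t \<noteq> 0"
    using hamming_replicate_0_eq_0_iff[of rest] len by (simp add: t_def)
  have pq: "p + q \<le> 2" using sum \<open>sum_list rest \<noteq> 0\<close> by arith
  have adj: "SR_adj m 3 v ([a,b,0,0] @ replicate (m - 4) 0) \<longleftrightarrow>
      a + b = 3 \<and> of_bool (p \<noteq> a) + of_bool (q \<noteq> b) + t = (2::nat)" for a b
    using v m len unfolding pad
    by (auto simp: SR_adj_iff_hamming SR_verts_def v_eq t_def sum_list_replicate)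
  have "p = 0 \<or> p = 1 \<or> p = 2" "q = 0 \<or> q = 1 \<or> q = 2" "t = 1 \<or> t \<ge> 2"
    using pq t by arith+
  then show ?thesis using pq unfolding nbrs_in_SR_n3_switching_set adj by (elim disjE; simp)
qed

lemma not_DS_SR_n3:
  assumes m: "m \<ge> 4"
  shows "\<not> DS (SR_verts m 3) (SR_adj m 3)"
proof (rule not_DS_SR_if_gm_switch_not_three_cliques[where C = "SR_n3_switching_set m" and r = 3])
  have len: "length ([a,b,c,d] @ replicate (m - 4) (0::nat)) = m" for a b c d using m by simp
  show "SR_n3_switching_set m \<subseteq> SR_verts m 3" "card (SR_n3_switching_set m) = 4"
    using len by (simp_all add: SR_n3_switching_set_def SR_verts_def)
  show "nbrs_in (SR_n3_switching_set m) (SR_adj m 3) c = 3" if "c \<in> SR_n3_switching_set m" for c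
    using that len unfolding nbrs_in_SR_n3_switching_set
    by (auto simp: SR_n3_switching_set_def SR_adj_iff_hamming hamming_append_same)
  show "nbrs_in (SR_n3_switching_set m) (SR_adj m 3) v \<in> {0, 2, 4}"
    if "v \<in> SR_verts m 3" "v \<notin> SR_n3_switching_set m" for v
    using nbrs_in_SR_n3_switching_set_outside[OF m that] .
  show "\<not> common_nbhds_three_cliques (SR_verts m 3) (gm_switch (SR_n3_switching_set m) (SR_adj m 3))"
    by (rule not_common_nbhds_three_cliques_path[of "[0,1,0,2] @ replicate (m - 4) 0" _
          "[0,2,0,1] @ replicate (m - 4) 0" "[0,1,1,1] @ replicate (m - 4) 0"
          "[1,1,0,1] @ replicate (m - 4) 0" "[3,0,0,0] @ replicate (m - 4) 0"])
      (unfold gm_switch_def nbrs_in_SR_n3_switching_set,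
        use len in \<open>simp_all add: SR_verts_def SR_adj_iff_hamming SR_n3_switching_set_def hamming_append_same\<close>)
qed

theorem proposition14:
  fixes m n :: nat
  assumes "(m = 4 \<and> n \<ge> 3) \<or> (n = 3 \<and> m \<ge> 4)"
  shows "\<not> DS (SR_verts m n) (SR_adj m n)"
proof -
  consider "n = 3" "m \<ge> 4" | "m = 4" "n = 4" | "m = 4" "n \<ge> 5"
    using assms by linarith
  then show ?thesis
    by cases (use not_DS_SR_n3 not_DS_SR44 not_DS_SR4 in auto)
qed

end
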